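(* Let $H$ be a separable infinite-dimensional complex Hilbert space and $T\in\mathcal{L}(H)$. If any of the following conditions holds, then $T$ is not universal: (i) the interior of the point spectrum $\sigma_p(T;H)$ is empty; (ii) the interior of the essential spectrum $\sigma_e(T;H)$ is empty; (iii) every non-zero eigenvalue $\alpha\in\sigma_p(T;H)$ has finite multiplicity.
   Context: $\mathcal{L}(H)$ denotes the bounded linear operators on $H$. Operators $T_1\in\mathcal{L}(H_1)$, $T_2\in\mathcal{L}(H_2)$ are similar if there is a linear isomorphism $J:H_1\to H_2$ with $T_1=J^{-1}T_2J$. An operator $U\in\mathcal{L}(H)$ is universal if for every $T\in\mathcal{L}(H)$ there exist a closed subspace $M\subset H$ with $U(M)\subset M$ and a constant $c\neq0$ such that $U|_M:M\to M$ and $cT:H\to H$ are similar. $\sigma_p(T;H)$ is the point spectrum and $\sigma_e(T;H)=\{\lambda: T-\lambda I\text{ is not Fredholm}\}$ the essential spectrum. *)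

theory Defs
  imports "HOL-Analysis.Analysis"
begin

class complex_vector = real_vector +
  fixes scaleC :: "complex \<Rightarrow> 'a \<Rightarrow> 'a"
  assumes scaleC_add_right: "scaleC a (x + y) = scaleC a x + scaleC a y"
    and scaleC_add_left: "scaleC (a + b) x = scaleC a x + scaleC b x"
    and scaleC_scaleC: "scaleC a (scaleC b x) = scaleC (a * b) x"
    and scaleC_one: "scaleC 1 x = x"
    and scaleR_scaleC: "scaleR r x = scaleC (complex_of_real r) x"

class complex_inner = complex_vector + real_normed_vector +
  fixes cinner :: "'a \<Rightarrow> 'a \<Rightarrow> complex"
  assumes cinner_commute: "cinner x y = cnj (cinner y x)"
    and cinner_add_right: "cinner x (y + z) = cinner x y + cinner x z"
    and cinner_scaleC_right: "cinner x (scaleC c y) = c * cinner x y"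
    and cinner_ge_zero: "0 \<le> Re (cinner x x)"
    and cinner_eq_zero_iff: "cinner x x = 0 \<longleftrightarrow> x = 0"
    and norm_eq_sqrt_cinner: "norm x = sqrt (Re (cinner x x))"

class chilbert_space = complex_inner + complete_space

definition cspan :: "'a::complex_vector set \<Rightarrow> 'a set" where
  "cspan S = {(\<Sum>x\<in>F. scaleC (c x) x) | F c. finite F \<and> F \<subseteq> S}"

definition csubspace :: "'a::complex_vector set \<Rightarrow> bool" where
  "csubspace M \<longleftrightarrow> 0 \<in> M \<and> (\<forall>x\<in>M. \<forall>y\<in>M. x + y \<in> M) \<and> (\<forall>c. \<forall>x\<in>M. scaleC c x \<in> M)"

definition cfinite_dim :: "'a::complex_vector set \<Rightarrow> bool" where
  "cfinite_dim A \<longleftrightarrow> (\<exists>F. finite F \<and> cspan F = A)"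

definition countably_dense :: "'a::topological_space set \<Rightarrow> bool" where
  "countably_dense A \<longleftrightarrow> (\<exists>D. countable D \<and> D \<subseteq> A \<and> A \<subseteq> closure D)"

definition clinear_on :: "'a::complex_vector set \<Rightarrow> ('a \<Rightarrow> 'b::complex_vector) \<Rightarrow> bool" where
  "clinear_on M f \<longleftrightarrow> (\<forall>x\<in>M. \<forall>y\<in>M. f (x + y) = f x + f y) \<and> (\<forall>c. \<forall>x\<in>M. f (scaleC c x) = scaleC c (f x))"

definition cbounded_on :: "'a::real_normed_vector set \<Rightarrow> ('a \<Rightarrow> 'b::real_normed_vector) \<Rightarrow> bool" where
  "cbounded_on M f \<longleftrightarrow> (\<exists>K. \<forall>x\<in>M. norm (f x) \<le> K * norm x)"

definition bounded_clinear_op :: "('a::complex_inner \<Rightarrow> 'a) \<Rightarrow> bool" where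
  "bounded_clinear_op T \<longleftrightarrow> clinear_on UNIV T \<and> cbounded_on UNIV T"

definition similar_ops ::
  "'a::complex_inner set \<Rightarrow> ('a \<Rightarrow> 'a) \<Rightarrow> 'b::complex_inner set \<Rightarrow> ('b \<Rightarrow> 'b) \<Rightarrow> bool" where
  "similar_ops M A N B \<longleftrightarrow>
     (\<exists>J. bij_betw J M N \<and> clinear_on M J \<and> cbounded_on M J \<and> cbounded_on N (inv_into M J)
        \<and> (\<forall>x\<in>M. A x = inv_into M J (B (J x))))"

definition universal_op :: "('a::chilbert_space \<Rightarrow> 'a) \<Rightarrow> bool" where
  "universal_op U \<longleftrightarrow> bounded_clinear_op U \<and>
     (\<forall>T. bounded_clinear_op T \<longrightarrow>
        (\<exists>M c. csubspace M \<and> closed M \<and> U ` M \<subseteq> M \<and> c \<noteq> 0 \<and>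
               similar_ops M U (UNIV :: 'a set) (\<lambda>x. scaleC c (T x))))"

definition point_spectrum :: "('a::complex_vector \<Rightarrow> 'a) \<Rightarrow> complex set" where
  "point_spectrum T = {z. \<exists>x. x \<noteq> 0 \<and> T x = scaleC z x}"

definition eigenspace :: "('a::complex_vector \<Rightarrow> 'a) \<Rightarrow> complex \<Rightarrow> 'a set" where
  "eigenspace T \<alpha> = {x. T x = scaleC \<alpha> x}"

text \<open>Fredholm: closed range, finite-dimensional kernel, finite-codimensional range.\<close>
definition fredholm :: "('a::complex_inner \<Rightarrow> 'a) \<Rightarrow> bool" where
  "fredholm S \<longleftrightarrow> closed (range S) \<and> cfinite_dim {x. S x = 0} \<and>
     (\<exists>F. finite F \<and> cspan (range S \<union> F) = UNIV)"

definition essential_spectrum :: "('a::complex_inner \<Rightarrow> 'a) \<Rightarrow> complex set" where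
  "essential_spectrum T = {z. \<not> fredholm (\<lambda>x. T x - scaleC z x)}"

end

theory Submission
  imports Defs "HOL-Library.Nat_Bijection"
begin

text \<open>
  A universal operator \<open>T\<close> contains, up to similarity and a nonzero factor \<open>c\<close>, a copy of
  every bounded operator; we feed it the backward shift \<open>S\<close> of infinite multiplicity,
  \<open>S e(n+1,k) = e(n,k)\<close>, \<open>S e(0,k) = 0\<close>, on an orthonormal family indexed by \<open>\<nat> \<times> \<nat>\<close>
  (which exists because \<open>H\<close> is infinite-dimensional). For \<open>|\<lambda>| < 1\<close> the vectors
  \<open>v\<^sub>k = \<Sum>\<^sub>n \<lambda>\<^sup>n e(n,k)\<close> are eigenvectors of \<open>S\<close> for \<open>\<lambda>\<close>, and they are linearly independent since
  \<open>\<langle>e(0,j), v\<^sub>k\<rangle> = \<delta>\<^sub>j\<^sub>k\<close>. Transported through the similarity, they show that every \<open>\<mu>\<close> with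
  \<open>|\<mu>| < |c|\<close> is an eigenvalue of \<open>T\<close> with infinite-dimensional eigenspace. Hence both the point
  spectrum and the essential spectrum of \<open>T\<close> contain a disc around \<open>0\<close>, and \<open>T\<close> has nonzero
  eigenvalues of infinite multiplicity.
\<close>

interpretation cvs: vector_space "scaleC :: complex \<Rightarrow> 'a \<Rightarrow> 'a::complex_vector"
  by unfold_locales (auto simp: scaleC_add_right scaleC_add_left scaleC_scaleC scaleC_one)

lemma cspan_eq_span: "cspan S = cvs.span S"
  unfolding cspan_def cvs.span_explicit by blast

lemma not_cfinite_dim_if_independent:
  assumes "cvs.independent S" "infinite S" "S \<subseteq> V"
  shows "\<not> cfinite_dim V"
  using assms cvs.independent_span_bound unfolding cfinite_dim_def cspan_eq_span by blast

lemma linear_if_clinear_on_UNIV: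
  "clinear_on UNIV K \<Longrightarrow> Vector_Spaces.linear scaleC scaleC K"
  unfolding clinear_on_def Vector_Spaces.linear_iff by (simp add: cvs.vector_space_axioms)

lemma clinear_on_inv_into:
  assumes M: "csubspace M" and J: "bij_betw J M UNIV" "clinear_on M J"
  shows "clinear_on UNIV (inv_into M J)"
proof -
  let ?K = "inv_into M J"
  have K: "?K y \<in> M" "J (?K y) = y" for y
    using J(1) by (auto simp: bij_betw_def inv_into_into f_inv_into_f)
  have inj: "inj_on J M" using J(1) by (simp add: bij_betw_def)
  show ?thesis
    unfolding clinear_on_def
  proof (intro conjI ballI allI)
    fix x y
    show "?K (x + y) = ?K x + ?K y"
      using M K J(2) by (intro inv_into_f_eq[OF inj]) (auto simp: csubspace_def clinear_on_def)
  next
    fix c x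
    show "?K (scaleC c x) = scaleC c (?K x)"
      using M K J(2) by (intro inv_into_f_eq[OF inj]) (auto simp: csubspace_def clinear_on_def)
  qed
qed

lemma cinner_scaleC_left: "cinner (scaleC c x) y = cnj c * cinner x y"
  by (metis cinner_commute cinner_scaleC_right complex_cnj_mult)

lemma cinner_add_left: "cinner (x + y) z = cinner x z + cinner y z"
  by (metis cinner_commute cinner_add_right complex_cnj_add)

lemma cinner_zero_right [simp]: "cinner x 0 = 0"
  using cinner_add_right[of x 0 0] by simp

lemma cinner_zero_left [simp]: "cinner 0 x = 0"
  using cinner_add_left[of 0 0 x] by simp

lemma cinner_diff_right: "cinner x (y - z) = cinner x y - cinner x z"
  using cinner_add_right[of x "y - z" z] by simp

lemma cinner_diff_left: "cinner (y - z) x = cinner y x - cinner z x"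
  using cinner_add_left[of "y - z" z x] by simp

lemma cinner_sum_right: "cinner x (\<Sum>i\<in>F. f i) = (\<Sum>i\<in>F. cinner x (f i))"
  by (induction F rule: infinite_finite_induct) (auto simp: cinner_add_right)

lemma cinner_sum_left: "cinner (\<Sum>i\<in>F. f i) x = (\<Sum>i\<in>F. cinner (f i) x)"
  by (induction F rule: infinite_finite_induct) (auto simp: cinner_add_left)

lemma cinner_self: "cinner x x = complex_of_real ((norm x)\<^sup>2)"
proof -
  have "Im (cinner x x) = 0"
    using cinner_commute[of x x] by (metis cnj.simps(2) neg_equal_zero)
  moreover have "(norm x)\<^sup>2 = Re (cinner x x)"
    using norm_eq_sqrt_cinner[of x] cinner_ge_zero[of x] by simp
  ultimately show ?thesis by (simp add: complex_eq_iff)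
qed

lemma power2_norm_eq_cinner: "(norm x)\<^sup>2 = Re (cinner x x)"
  by (simp add: cinner_self)

lemma cnj_mult_self: "cnj z * z = complex_of_real ((cmod z)\<^sup>2)"
  by (metis complex_norm_square mult.commute)

lemma norm_scaleC: "norm (scaleC c (x::'a::complex_inner)) = cmod c * norm x"
proof -
  have "cinner (scaleC c x) (scaleC c x) = cnj c * c * cinner x x"
    by (simp add: cinner_scaleC_left cinner_scaleC_right mult.assoc)
  also have "\<dots> = complex_of_real ((cmod c * norm x)\<^sup>2)"
    by (simp add: cnj_mult_self cinner_self power_mult_distrib)
  finally have "(norm (scaleC c x))\<^sup>2 = (cmod c * norm x)\<^sup>2"
    by (simp add: power2_norm_eq_cinner)
  then show ?thesis by simp
qed

lemma bounded_linear_scaleC: "bounded_linear (\<lambda>x::'a::complex_inner. scaleC c x)"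
proof
  show "scaleC c (x + y) = scaleC c x + scaleC c y" for x y :: 'a
    by (rule scaleC_add_right)
  show "scaleC c (scaleR r x) = scaleR r (scaleC c x)" for r and x :: 'a
    by (simp add: scaleR_scaleC mult.commute)
  show "\<exists>K. \<forall>x::'a. norm (scaleC c x) \<le> norm x * K"
    by (rule exI[of _ "cmod c"]) (simp add: norm_scaleC)
qed

lemma independent_if_biorthogonal:
  fixes v g :: "'i \<Rightarrow> 'a::complex_inner"
  assumes biorth: "\<And>i j. cinner (g j) (v i) = (if i = j then 1 else 0)"
  shows "inj v" "cvs.independent (range v)"
proof -
  show "inj v"
    by (rule injI) (metis biorth one_neq_zero)
  show "cvs.independent (range v)"
    unfolding cvs.independent_explicit_finite_subsets
  proof (intro allI impI ballI)
    fix S u x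
    assume S: "S \<subseteq> range v" "finite S" and sum0: "(\<Sum>y\<in>S. scaleC (u y) y) = 0" and "x \<in> S"
    then obtain i where i: "x = v i" by blast
    have coord: "cinner (g i) y = (if y = x then 1 else 0)" if "y \<in> range v" for y
    proof -
      from that obtain j where j: "y = v j" by blast
      show ?thesis
        using biorth[of i j] biorth[of i i] injD[OF \<open>inj v\<close>, of j i] i j by auto
    qed
    have "0 = cinner (g i) (\<Sum>y\<in>S. scaleC (u y) y)"
      by (simp add: sum0)
    also have "\<dots> = (\<Sum>y\<in>S. if y = x then u y else 0)"
      unfolding cinner_sum_right cinner_scaleC_right
      by (rule sum.cong) (use S(1) coord in auto)
    also have "\<dots> = u x"
      using S(2) \<open>x \<in> S\<close> by simp
    finally show "u x = 0" by simp
  qed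
qed

section \<open>Orthonormal families\<close>

definition orthonormal_on :: "'i set \<Rightarrow> ('i \<Rightarrow> 'a::complex_inner) \<Rightarrow> bool" where
  "orthonormal_on I e \<longleftrightarrow> (\<forall>i\<in>I. \<forall>j\<in>I. cinner (e i) (e j) = (if i = j then 1 else 0))"

lemma orthonormal_on_cinner_sum:
  assumes "orthonormal_on I e" "finite F" "F \<subseteq> I" "j \<in> I"
  shows "cinner (e j) (\<Sum>i\<in>F. scaleC (a i) (e i)) = (if j \<in> F then a j else 0)"
proof -
  have "cinner (e j) (\<Sum>i\<in>F. scaleC (a i) (e i)) = (\<Sum>i\<in>F. if j = i then a i else 0)"
    unfolding cinner_sum_right cinner_scaleC_right
    by (rule sum.cong) (use assms in \<open>auto simp: orthonormal_on_def\<close>)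
  then show ?thesis using assms(2) by simp
qed

lemma orthonormal_on_cinner_sum_self:
  assumes "orthonormal_on I e" "finite F" "F \<subseteq> I"
  shows "cinner (\<Sum>i\<in>F. scaleC (a i) (e i)) (\<Sum>i\<in>F. scaleC (a i) (e i))
    = complex_of_real (\<Sum>i\<in>F. (cmod (a i))\<^sup>2)"
proof -
  have "cinner (\<Sum>i\<in>F. scaleC (a i) (e i)) (\<Sum>i\<in>F. scaleC (a i) (e i))
      = (\<Sum>j\<in>F. cnj (a j) * cinner (e j) (\<Sum>i\<in>F. scaleC (a i) (e i)))"
    by (simp add: cinner_sum_left cinner_scaleC_left)
  also have "\<dots> = (\<Sum>j\<in>F. cnj (a j) * a j)"
    by (rule sum.cong) (use orthonormal_on_cinner_sum[OF assms] assms(3) in auto)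
  finally show ?thesis by (simp add: cnj_mult_self)
qed

lemma orthonormal_on_norm_sum:
  assumes "orthonormal_on I e" "finite F" "F \<subseteq> I"
  shows "(norm (\<Sum>i\<in>F. scaleC (a i) (e i)))\<^sup>2 = (\<Sum>i\<in>F. (cmod (a i))\<^sup>2)"
  using orthonormal_on_cinner_sum_self[OF assms, of a] by (simp add: power2_norm_eq_cinner)

lemma bessel_inequality_finite:
  assumes "orthonormal_on I e" "finite F" "F \<subseteq> I"
  shows "(\<Sum>i\<in>F. (cmod (cinner (e i) x))\<^sup>2) \<le> (norm x)\<^sup>2"
proof -
  define s where "s = (\<Sum>i\<in>F. scaleC (cinner (e i) x) (e i))"
  define S where "S = (\<Sum>i\<in>F. (cmod (cinner (e i) x))\<^sup>2)"
  have sx: "cinner s x = complex_of_real S"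
    unfolding s_def S_def by (simp add: cinner_sum_left cinner_scaleC_left cnj_mult_self)
  then have xs: "cinner x s = complex_of_real S"
    using cinner_commute[of x s] by simp
  have ss: "cinner s s = complex_of_real S"
    unfolding s_def S_def by (rule orthonormal_on_cinner_sum_self[OF assms])
  have "cinner (x - s) (x - s) = cinner x x - cinner x s - cinner s x + cinner s s"
    by (simp add: cinner_diff_left cinner_diff_right)
  also have "\<dots> = complex_of_real ((norm x)\<^sup>2 - S)"
    by (simp only: sx xs ss) (simp add: cinner_self)
  finally show ?thesis
    using cinner_ge_zero[of "x - s"] unfolding S_def by simp
qed

lemma bounded_linear_cinner_orthonormal:
  assumes "orthonormal_on I e" "j \<in> I"
  shows "bounded_linear (\<lambda>x. cinner (e j) x)"
proof
  show "cinner (e j) (x + y) = cinner (e j) x + cinner (e j) y" for x y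
    by (rule cinner_add_right)
  show "cinner (e j) (scaleR r x) = scaleR r (cinner (e j) x)" for r x
    by (simp add: scaleR_scaleC cinner_scaleC_right scaleR_conv_of_real)
  show "\<exists>K. \<forall>x. norm (cinner (e j) x) \<le> norm x * K"
  proof (intro exI[of _ 1] allI)
    fix x
    have "(cmod (cinner (e j) x))\<^sup>2 \<le> (norm x)\<^sup>2"
      using bessel_inequality_finite[OF assms(1), of "{j}" x] assms(2) by simp
    then show "norm (cinner (e j) x) \<le> norm x * 1"
      using power2_le_imp_le by fastforce
  qed
qed

lemma norm_sum_bounded_tail:
  fixes f :: "'i \<Rightarrow> 'b::real_normed_vector"
  assumes "g summable_on A"
    and bound: "\<And>G. finite G \<Longrightarrow> G \<subseteq> A \<Longrightarrow> (norm (sum f G))\<^sup>2 \<le> sum g G"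
    and "e > 0"
  obtains F0 where "finite F0" "F0 \<subseteq> A"
    "\<And>F. finite F \<Longrightarrow> F0 \<subseteq> F \<Longrightarrow> F \<subseteq> A \<Longrightarrow> dist (sum f F0) (sum f F) < e"
proof -
  from assms(1) obtain L where lim: "(sum g \<longlongrightarrow> L) (finite_subsets_at_top A)"
    unfolding summable_on_def has_sum_def by blast
  define d where "d = e\<^sup>2 / 2"
  have "d > 0" using \<open>e > 0\<close> by (simp add: d_def)
  then have "eventually (\<lambda>F. dist (sum g F) L < d) (finite_subsets_at_top A)"
    using lim by (simp add: tendsto_iff)
  then obtain F0 where F0: "finite F0" "F0 \<subseteq> A"
    and near: "\<forall>F. finite F \<and> F0 \<subseteq> F \<and> F \<subseteq> A \<longrightarrow> dist (sum g F) L < d"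
    unfolding eventually_finite_subsets_at_top by blast
  show ?thesis
  proof (rule that[OF F0])
    fix F assume F: "finite F" "F0 \<subseteq> F" "F \<subseteq> A"
    have "dist (sum f F0) (sum f F) = norm (sum f (F - F0))"
      using F by (simp add: sum_diff dist_norm norm_minus_commute[of "sum f F0"])
    moreover have "(norm (sum f (F - F0)))\<^sup>2 \<le> sum g F - sum g F0"
      using bound[of "F - F0"] F by (auto simp: sum_diff)
    moreover have "sum g F - sum g F0 < e\<^sup>2"
    proof -
      have "dist (sum g F) L < d" "dist (sum g F0) L < d"
        using near F F0 by auto
      then show ?thesis
        unfolding dist_real_def abs_less_iff d_def by simp
    qed
    ultimately have "(dist (sum f F0) (sum f F))\<^sup>2 < e\<^sup>2" by simp
    then show "dist (sum f F0) (sum f F) < e"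
      by (rule power_less_imp_less_base) (use \<open>e > 0\<close> in simp)
  qed
qed

lemma summable_on_if_norm_sum_bounded:
  fixes f :: "'i \<Rightarrow> 'b::{real_normed_vector,complete_space}"
  assumes "g summable_on A"
    and bound: "\<And>G. finite G \<Longrightarrow> G \<subseteq> A \<Longrightarrow> (norm (sum f G))\<^sup>2 \<le> sum g G"
  shows "f summable_on A"
proof -
  have "\<exists>P. eventually P (finite_subsets_at_top A) \<and>
            (\<forall>F1 F2. P F1 \<and> P F2 \<longrightarrow> dist (sum f F1) (sum f F2) < e)" if "e > 0" for e
  proof -
    obtain F0 where F0: "finite F0" "F0 \<subseteq> A"
      and close: "\<And>F. finite F \<Longrightarrow> F0 \<subseteq> F \<Longrightarrow> F \<subseteq> A \<Longrightarrow> dist (sum f F0) (sum f F) < e / 2"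
      using norm_sum_bounded_tail[OF assms half_gt_zero[OF \<open>e > 0\<close>]] by blast
    define P where "P F \<longleftrightarrow> finite F \<and> F0 \<subseteq> F \<and> F \<subseteq> A" for F
    have "eventually P (finite_subsets_at_top A)"
      unfolding eventually_finite_subsets_at_top P_def using F0 by blast
    moreover have "dist (sum f F1) (sum f F2) < e" if "P F1" "P F2" for F1 F2
    proof -
      have "dist (sum f F0) (sum f F1) < e / 2" "dist (sum f F0) (sum f F2) < e / 2"
        using that close unfolding P_def by auto
      then show ?thesis
        using dist_triangle3[of "sum f F1" "sum f F2" "sum f F0"] by linarith
    qed
    ultimately show ?thesis by blast
  qed
  then have "cauchy_filter (filtermap (sum f) (finite_subsets_at_top A))"
    by (simp add: cauchy_filter_metric_filtermap)
  then obtain L where "filtermap (sum f) (finite_subsets_at_top A) \<le> nhds L"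
    by (metis convergent_filter_iff_cauchy convergent_filter_iff)
  then show ?thesis
    unfolding summable_on_def has_sum_def filterlim_def by blast
qed

lemma orthonormal_on_summable:
  fixes e :: "'i \<Rightarrow> 'a::chilbert_space"
  assumes "orthonormal_on I e" "(\<lambda>i. (cmod (a i))\<^sup>2) summable_on I"
  shows "(\<lambda>i. scaleC (a i) (e i)) summable_on I"
  by (rule summable_on_if_norm_sum_bounded[OF assms(2)]) (simp add: orthonormal_on_norm_sum[OF assms(1)])

lemma orthonormal_on_has_sum_coeff:
  assumes "orthonormal_on I e" "((\<lambda>i. scaleC (a i) (e i)) has_sum s) I" "j \<in> I"
  shows "cinner (e j) s = a j"
proof -
  have "((\<lambda>i. cinner (e j) (scaleC (a i) (e i))) has_sum cinner (e j) s) I"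
    by (rule has_sum_bounded_linear[OF bounded_linear_cinner_orthonormal[OF assms(1,3)] assms(2)])
  then have "((\<lambda>i. if i = j then a j else 0) has_sum cinner (e j) s) I"
    by (rule has_sum_cong[THEN iffD1, rotated])
      (use assms(1,3) in \<open>auto simp: orthonormal_on_def cinner_scaleC_right\<close>)
  moreover have "((\<lambda>i. if i = j then a j else 0) has_sum a j) I"
    by (rule has_sum_finite_neutralI[of "{j}"]) (use assms(3) in auto)
  ultimately show ?thesis
    using has_sum_unique by blast
qed

lemma orthonormal_on_has_sum_norm_le:
  assumes "orthonormal_on I e" "((\<lambda>i. scaleC (a i) (e i)) has_sum s) I"
    and "\<And>F. finite F \<Longrightarrow> F \<subseteq> I \<Longrightarrow> (\<Sum>i\<in>F. (cmod (a i))\<^sup>2) \<le> B"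
  shows "(norm s)\<^sup>2 \<le> B"
proof (rule tendsto_upperbound)
  show "((\<lambda>F. (norm (\<Sum>i\<in>F. scaleC (a i) (e i)))\<^sup>2) \<longlongrightarrow> (norm s)\<^sup>2) (finite_subsets_at_top I)"
    using assms(2) unfolding has_sum_def by (intro tendsto_power tendsto_norm)
  show "\<forall>\<^sub>F F in finite_subsets_at_top I. (norm (\<Sum>i\<in>F. scaleC (a i) (e i)))\<^sup>2 \<le> B"
    by (rule eventually_finite_subsets_at_top_weakI)
      (metis orthonormal_on_norm_sum[OF assms(1)] assms(3))
qed (rule finite_subsets_at_top_neq_bot)

lemma exists_unit_orthogonal:
  assumes "\<not> cfinite_dim (UNIV :: 'a::complex_inner set)" "orthonormal_on I e" "finite I"
  shows "\<exists>y::'a. norm y = 1 \<and> (\<forall>i\<in>I. cinner (e i) y = 0)"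
proof -
  have "cspan (e ` I) \<noteq> UNIV"
    using assms(1,3) unfolding cfinite_dim_def by blast
  then obtain x where x: "x \<notin> cspan (e ` I)" by blast
  define z where "z = x - (\<Sum>i\<in>I. scaleC (cinner (e i) x) (e i))"
  have orth: "cinner (e j) z = 0" if "j \<in> I" for j
    using orthonormal_on_cinner_sum[OF assms(2,3) order_refl that]
    by (simp add: z_def cinner_diff_right that)
  have "z \<noteq> 0"
  proof
    assume "z = 0"
    then have "x = (\<Sum>i\<in>I. scaleC (cinner (e i) x) (e i))" by (simp add: z_def)
    also have "\<dots> \<in> cspan (e ` I)"
      unfolding cspan_eq_span by (intro cvs.span_sum cvs.span_scale cvs.span_base) auto
    finally show False using x by blast
  qed
  define y where "y = scaleR (1 / norm z) z"
  have "norm y = 1"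
    using \<open>z \<noteq> 0\<close> by (simp add: y_def)
  moreover have "\<forall>i\<in>I. cinner (e i) y = 0"
    using orth by (simp add: y_def scaleR_scaleC cinner_scaleC_right)
  ultimately show ?thesis by blast
qed

fun orthonormal_seq :: "nat \<Rightarrow> 'a::complex_inner" where
  "orthonormal_seq n =
     (SOME y. norm y = 1 \<and> (\<forall>x\<in>set (map orthonormal_seq [0..<n]). cinner x y = 0))"

declare orthonormal_seq.simps [simp del]

lemma orthonormal_on_orthonormal_seq:
  assumes "\<not> cfinite_dim (UNIV :: 'a::complex_inner set)"
  shows "orthonormal_on UNIV (orthonormal_seq :: nat \<Rightarrow> 'a)"
proof -
  let ?e = "orthonormal_seq :: nat \<Rightarrow> 'a"
  have "orthonormal_on {..<n} ?e" for n
  proof (induction n)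
    case 0
    show ?case by (simp add: orthonormal_on_def)
  next
    case (Suc n)
    have "\<exists>y::'a. norm y = 1 \<and> (\<forall>i\<in>{..<n}. cinner (?e i) y = 0)"
      by (rule exists_unit_orthogonal[OF assms Suc.IH]) simp
    moreover have "?e n = (SOME y. norm y = 1 \<and> (\<forall>i\<in>{..<n}. cinner (?e i) y = 0))"
      by (subst orthonormal_seq.simps) (simp add: atLeast0LessThan)
    ultimately have n: "norm (?e n) = 1" "\<And>i. i < n \<Longrightarrow> cinner (?e i) (?e n) = 0"
      using someI_ex[of "\<lambda>y. norm y = 1 \<and> (\<forall>i\<in>{..<n}. cinner (?e i) y = 0)"] by auto
    have "cinner (?e n) (?e i) = 0" if "i < n" for i
      using n(2)[OF that] cinner_commute[of "?e n" "?e i"] by simp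
    moreover have "cinner (?e n) (?e n) = 1"
      using n(1) by (simp add: cinner_self)
    ultimately show ?case
      using Suc.IH n(2) unfolding orthonormal_on_def by (auto simp: less_Suc_eq)
  qed
  then show ?thesis
    unfolding orthonormal_on_def by (metis lessThan_iff less_Suc_eq_le max.cobounded1 max.cobounded2)
qed

section \<open>The backward shift of infinite multiplicity\<close>

text \<open>For an orthonormal \<open>f\<close>, \<open>backward_shift f (f (n+1, k)) = f (n, k)\<close> and \<open>backward_shift f (f (0, k)) = 0\<close>.\<close>

definition backward_shift :: "(nat \<times> nat \<Rightarrow> 'a::complex_inner) \<Rightarrow> 'a \<Rightarrow> 'a" where
  "backward_shift f x = infsum (\<lambda>(n, k). scaleC (cinner (f (Suc n, k)) x) (f (n, k))) UNIV"

lemma backward_shift_coeff_bound: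
  fixes f :: "nat \<times> nat \<Rightarrow> 'a::complex_inner"
  assumes "orthonormal_on UNIV f" "finite F"
  shows "(\<Sum>(n, k)\<in>F. (cmod (cinner (f (Suc n, k)) x))\<^sup>2) \<le> (norm x)\<^sup>2"
proof -
  let ?\<sigma> = "\<lambda>(n, k). (Suc n, k :: nat)"
  have "inj_on ?\<sigma> F" by (auto simp: inj_on_def)
  then have "(\<Sum>(n, k)\<in>F. (cmod (cinner (f (Suc n, k)) x))\<^sup>2) = (\<Sum>p\<in>?\<sigma> ` F. (cmod (cinner (f p) x))\<^sup>2)"
    by (simp add: sum.reindex case_prod_unfold)
  also have "\<dots> \<le> (norm x)\<^sup>2"
    using assms by (intro bessel_inequality_finite) auto
  finally show ?thesis .
qed

lemma backward_shift_has_sum: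
  fixes f :: "nat \<times> nat \<Rightarrow> 'a::chilbert_space"
  assumes "orthonormal_on UNIV f"
  shows "((\<lambda>(n, k). scaleC (cinner (f (Suc n, k)) x) (f (n, k))) has_sum backward_shift f x) UNIV"
proof -
  have "(\<lambda>(n, k). (cmod (cinner (f (Suc n, k)) x))\<^sup>2) summable_on UNIV"
    by (rule nonneg_bdd_above_summable_on)
      (auto intro!: bdd_aboveI[of _ "(norm x)\<^sup>2"] backward_shift_coeff_bound[OF assms])
  then have "(\<lambda>(n, k). scaleC (cinner (f (Suc n, k)) x) (f (n, k))) summable_on UNIV"
    using orthonormal_on_summable[OF assms, of "\<lambda>(n, k). cinner (f (Suc n, k)) x"]
    by (simp add: case_prod_unfold)
  then show ?thesis
    unfolding backward_shift_def by (rule has_sum_infsum)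
qed

lemma bounded_clinear_op_backward_shift:
  fixes f :: "nat \<times> nat \<Rightarrow> 'a::chilbert_space"
  assumes f: "orthonormal_on UNIV f"
  shows "bounded_clinear_op (backward_shift f)"
  unfolding bounded_clinear_op_def clinear_on_def cbounded_on_def
proof (intro conjI ballI allI exI)
  fix x y :: 'a
  have "((\<lambda>(n, k). scaleC (cinner (f (Suc n, k)) (x + y)) (f (n, k)))
      has_sum backward_shift f x + backward_shift f y) UNIV"
    using has_sum_add[OF backward_shift_has_sum[OF f, of x] backward_shift_has_sum[OF f, of y]]
    by (simp add: case_prod_unfold cinner_add_right scaleC_add_left)
  then show "backward_shift f (x + y) = backward_shift f x + backward_shift f y"
    using backward_shift_has_sum[OF f, of "x + y"] has_sum_unique by blast
next
  fix c and x :: 'a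
  have "((\<lambda>(n, k). scaleC (cinner (f (Suc n, k)) (scaleC c x)) (f (n, k)))
      has_sum scaleC c (backward_shift f x)) UNIV"
    using has_sum_bounded_linear[OF bounded_linear_scaleC backward_shift_has_sum[OF f, of x]]
    by (simp add: case_prod_unfold cinner_scaleC_right)
  then show "backward_shift f (scaleC c x) = scaleC c (backward_shift f x)"
    using backward_shift_has_sum[OF f, of "scaleC c x"] has_sum_unique by blast
next
  fix x :: 'a
  have "((\<lambda>p. scaleC (cinner (f (Suc (fst p), snd p)) x) (f p)) has_sum backward_shift f x) UNIV"
    using backward_shift_has_sum[OF f, of x] by (simp add: case_prod_unfold)
  then have "(norm (backward_shift f x))\<^sup>2 \<le> (norm x)\<^sup>2"
    by (rule orthonormal_on_has_sum_norm_le[OF f])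
      (use backward_shift_coeff_bound[OF f] in \<open>simp add: case_prod_unfold\<close>)
  then show "norm (backward_shift f x) \<le> 1 * norm x"
    using power2_le_imp_le by fastforce
qed

definition shift_eigenvector :: "(nat \<times> nat \<Rightarrow> 'a::complex_inner) \<Rightarrow> complex \<Rightarrow> nat \<Rightarrow> 'a" where
  "shift_eigenvector f l k = infsum (\<lambda>(n, j). scaleC (if j = k then l ^ n else 0) (f (n, j))) UNIV"

lemma shift_eigenvector_coeff_summable:
  assumes "cmod l < 1"
  shows "(\<lambda>(n, j). (cmod (if j = k then l ^ n else 0))\<^sup>2) summable_on (UNIV :: (nat \<times> nat) set)"
proof (rule nonneg_bdd_above_summable_on)
  define r where "r = (cmod l)\<^sup>2"
  have r: "0 \<le> r" "r < 1"
    using assms by (auto simp: r_def abs_square_less_1)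
  have coeff: "(\<lambda>(n, j). (cmod (if j = k then l ^ n else 0))\<^sup>2) = (\<lambda>(n, j). if j = k then r ^ n else 0)"
    by (auto simp: r_def norm_power power_mult[symmetric] mult.commute)
  have "(\<Sum>(n, j)\<in>F. if j = k then r ^ n else 0) \<le> (\<Sum>n. r ^ n)" if "finite F" for F
  proof -
    define G where "G = {p\<in>F. snd p = k}"
    have "(\<Sum>(n, j)\<in>F. if j = k then r ^ n else 0) = (\<Sum>p\<in>G. r ^ fst p)"
      using that by (simp add: G_def sum.inter_filter case_prod_unfold)
    also have "\<dots> = (\<Sum>n\<in>fst ` G. r ^ n)"
      by (subst sum.reindex) (auto simp: inj_on_def G_def prod_eq_iff)
    also have "\<dots> \<le> (\<Sum>n. r ^ n)"
      by (rule sum_le_suminf) (use r that G_def in \<open>auto intro!: summable_geometric\<close>)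
    finally show ?thesis .
  qed
  then show "bdd_above (sum (\<lambda>(n, j). (cmod (if j = k then l ^ n else 0))\<^sup>2) ` {F. F \<subseteq> UNIV \<and> finite F})"
    unfolding coeff by (auto intro!: bdd_aboveI[of _ "\<Sum>n. r ^ n"])
qed auto

lemma shift_eigenvector_has_sum:
  fixes f :: "nat \<times> nat \<Rightarrow> 'a::chilbert_space"
  assumes "orthonormal_on UNIV f" "cmod l < 1"
  shows "((\<lambda>(n, j). scaleC (if j = k then l ^ n else 0) (f (n, j))) has_sum shift_eigenvector f l k) UNIV"
proof -
  have "(\<lambda>(n, j). scaleC (if j = k then l ^ n else 0) (f (n, j))) summable_on UNIV"
    using orthonormal_on_summable[OF assms(1), of "\<lambda>(n, j). if j = k then l ^ n else 0"]
      shift_eigenvector_coeff_summable[OF assms(2), of k]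
    by (simp add: case_prod_unfold)
  then show ?thesis
    unfolding shift_eigenvector_def by (rule has_sum_infsum)
qed

lemma cinner_shift_eigenvector:
  fixes f :: "nat \<times> nat \<Rightarrow> 'a::chilbert_space"
  assumes "orthonormal_on UNIV f" "cmod l < 1"
  shows "cinner (f (n, j)) (shift_eigenvector f l k) = (if j = k then l ^ n else 0)"
  using orthonormal_on_has_sum_coeff[OF assms(1), of "\<lambda>(n, j). if j = k then l ^ n else 0"]
    shift_eigenvector_has_sum[OF assms, of k]
  by (simp add: case_prod_unfold)

lemma backward_shift_shift_eigenvector:
  fixes f :: "nat \<times> nat \<Rightarrow> 'a::chilbert_space"
  assumes "orthonormal_on UNIV f" "cmod l < 1"
  shows "backward_shift f (shift_eigenvector f l k) = scaleC l (shift_eigenvector f l k)"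
proof -
  have scaled: "((\<lambda>(n, j). scaleC (l * (if j = k then l ^ n else 0)) (f (n, j)))
      has_sum scaleC l (shift_eigenvector f l k)) UNIV"
    using has_sum_bounded_linear[OF bounded_linear_scaleC[of l] shift_eigenvector_has_sum[OF assms, of k]]
    by (simp add: case_prod_unfold)
  have "(\<lambda>(n, j). scaleC (cinner (f (Suc n, j)) (shift_eigenvector f l k)) (f (n, j)))
      = (\<lambda>(n, j). scaleC (l * (if j = k then l ^ n else 0)) (f (n, j)))"
    by (auto simp: fun_eq_iff cinner_shift_eigenvector[OF assms])
  with scaled show ?thesis
    using has_sum_unique[OF backward_shift_has_sum[OF assms(1)]] by simp
qed

section \<open>Universal operators\<close>

lemma similar_ops_independent_eigenvectors:
  assumes sim: "similar_ops M A UNIV B" and M: "csubspace M"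
    and S: "S \<subseteq> eigenspace B \<mu>" "cvs.independent S" "infinite S"
  obtains S' where "S' \<subseteq> eigenspace A \<mu>" "cvs.independent S'" "infinite S'"
proof -
  obtain J where J: "bij_betw J M UNIV" "clinear_on M J"
    and AB: "\<forall>x\<in>M. A x = inv_into M J (B (J x))"
    using sim unfolding similar_ops_def by blast
  let ?K = "inv_into M J"
  have K: "?K y \<in> M" "J (?K y) = y" for y
    using J(1) by (auto simp: bij_betw_def inv_into_into f_inv_into_f)
  have lin: "clinear_on UNIV ?K" by (rule clinear_on_inv_into[OF M J])
  have inj: "inj ?K" using J(1) by (simp add: bij_betw_def inj_on_inv_into)
  have "?K ` S \<subseteq> eigenspace A \<mu>"
  proof
    fix y assume "y \<in> ?K ` S"
    then obtain x where x: "x \<in> S" "y = ?K x" by blast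
    have "A y = ?K (B x)" using AB K x(2) by simp
    also have "\<dots> = scaleC \<mu> y" using S(1) x lin by (auto simp: eigenspace_def clinear_on_def)
    finally show "y \<in> eigenspace A \<mu>" by (simp add: eigenspace_def)
  qed
  moreover have "cvs.independent (?K ` S)"
    using linear_if_clinear_on_UNIV[OF lin] inj S(2)
    by (metis module_hom_iff_linear module_hom.independent_injective_image inj_on_subset subset_UNIV)
  moreover have "infinite (?K ` S)"
    using S(3) inj by (metis finite_imageD inj_on_subset subset_UNIV)
  ultimately show ?thesis by (rule that)
qed

lemma point_spectrum_if_infinite_eigenspace:
  assumes "infinite (eigenspace T \<mu>)"
  shows "\<mu> \<in> point_spectrum T"
proof -
  obtain x where "x \<in> eigenspace T \<mu> - {0}"
    using infinite_imp_nonempty[OF infinite_remove[OF assms]] by blast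
  then show ?thesis
    by (auto simp: point_spectrum_def eigenspace_def)
qed

lemma essential_spectrum_if_not_cfinite_dim_eigenspace:
  assumes "\<not> cfinite_dim (eigenspace T \<mu>)"
  shows "\<mu> \<in> essential_spectrum T"
proof -
  have "{x. T x - scaleC \<mu> x = 0} = eigenspace T \<mu>"
    by (auto simp: eigenspace_def)
  with assms show ?thesis
    by (simp add: essential_spectrum_def fredholm_def)
qed

lemma universal_op_eigenvalues:
  fixes T :: "'h::chilbert_space \<Rightarrow> 'h"
  assumes "universal_op T" "\<not> cfinite_dim (UNIV :: 'h set)"
  obtains r where "r > 0"
    "\<And>\<mu>. cmod \<mu> < r \<Longrightarrow> \<mu> \<in> point_spectrum T \<and> \<not> cfinite_dim (eigenspace T \<mu>)"
proof -
  define f :: "nat \<times> nat \<Rightarrow> 'h" where "f = orthonormal_seq \<circ> prod_encode"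
  have f: "orthonormal_on UNIV f"
    using orthonormal_on_orthonormal_seq[OF assms(2)] by (simp add: orthonormal_on_def f_def)
  obtain M c where M: "csubspace M" and "c \<noteq> 0"
    and sim: "similar_ops M T UNIV (\<lambda>x. scaleC c (backward_shift f x))"
    using assms(1) bounded_clinear_op_backward_shift[OF f] unfolding universal_op_def by blast
  have "\<mu> \<in> point_spectrum T \<and> \<not> cfinite_dim (eigenspace T \<mu>)" if "cmod \<mu> < cmod c" for \<mu>
  proof -
    define l where "l = \<mu> / c"
    have l: "cmod l < 1" "c * l = \<mu>"
      using that \<open>c \<noteq> 0\<close> by (simp_all add: l_def norm_divide divide_less_eq)
    let ?v = "shift_eigenvector f l"
    have eigen: "range ?v \<subseteq> eigenspace (\<lambda>x. scaleC c (backward_shift f x)) \<mu>"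
      by (auto simp: eigenspace_def backward_shift_shift_eigenvector[OF f l(1)] l(2))
    have "cinner (f (0, j)) (?v k) = (if k = j then 1 else 0)" for j k
      by (simp add: cinner_shift_eigenvector[OF f l(1)])
    note biorth = independent_if_biorthogonal[OF this]
    obtain S where S: "S \<subseteq> eigenspace T \<mu>" "cvs.independent S" "infinite S"
      using similar_ops_independent_eigenvectors[OF sim M eigen biorth(2) range_inj_infinite[OF biorth(1)]] .
    then show ?thesis
      using point_spectrum_if_infinite_eigenspace not_cfinite_dim_if_independent finite_subset by metis
  qed
  with \<open>c \<noteq> 0\<close> show ?thesis
    using that[of "cmod c"] by simp
qed

theorem corollary2p3:
  fixes T :: "'h::chilbert_space \<Rightarrow> 'h"
  assumes "countably_dense (UNIV :: 'h set)"
    and "\<not> cfinite_dim (UNIV :: 'h set)"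
    and "bounded_clinear_op T"
    and "interior (point_spectrum T) = {}
         \<or> interior (essential_spectrum T) = {}
         \<or> (\<forall>\<alpha>\<in>point_spectrum T. \<alpha> \<noteq> 0 \<longrightarrow> cfinite_dim (eigenspace T \<alpha>))"
  shows "\<not> universal_op T"
proof
  assume "universal_op T"
  then obtain r where "r > 0"
    and disc: "\<And>\<mu>. cmod \<mu> < r \<Longrightarrow> \<mu> \<in> point_spectrum T \<and> \<not> cfinite_dim (eigenspace T \<mu>)"
    using universal_op_eigenvalues assms(2) by blast
  have "ball 0 r \<subseteq> point_spectrum T" "ball 0 r \<subseteq> essential_spectrum T"
    using disc by (auto simp: dist_norm intro!: essential_spectrum_if_not_cfinite_dim_eigenspace)
  then have "ball 0 r \<subseteq> interior (point_spectrum T)" "ball 0 r \<subseteq> interior (essential_spectrum T)"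
    by (simp_all add: interior_maximal)
  moreover have "0 \<in> ball (0::complex) r"
    using \<open>r > 0\<close> by simp
  moreover have "cmod (complex_of_real (r / 2)) < r" "complex_of_real (r / 2) \<noteq> 0"
    using \<open>r > 0\<close> by auto
  ultimately show False
    using assms(4) disc by blast
qed

end
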